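(* Let $N$ be a node and let $f_N^{1}\le f_N^{2}\le\dots\le f_N^{|\Gamma|}$ be the ordered list of the scan periods set for $N$ by the monitors $M_1,\dots,M_{|\Gamma|}$. Then the longest time frame during which an error concerning a connection of $N$ (a connection $N\to P$ present in $E$ but absent from $E_{AToM}$, or vice versa) can exist in the global snapshot $G_{AToM}$ is $f_N^{\lfloor|\Gamma|/2\rfloor+1}$.
   Context: The network is a directed graph $G=(V,E)$ of nodes that changes over time ($N\to P$ denotes $(N,P)\in E$); $\Gamma$ is a set of monitors. Each monitor $M_i$ repeatedly executes a verification round $PeeV(N)$ for each node $N$, treated as an atomic event, which updates its local snapshot $E_{M_i}$ so that immediately after the round, $(N,P)\in E_{M_i}$ iff $(N,P)\in E$ for all $P$; consecutive rounds of $M_i$ for $N$ are separated by the scan period $f_N^{i}$. Between rounds, $E_{M_i}$ is not modified for connections of $N$. The global snapshot is $G_{AToM}=(V,E_{AToM})$ with $E_{AToM}=\{(A,B):|\{M\in\Gamma:(A,B)\in E_M\}|>|\Gamma|/2\}$, i.e. a connection is included iff it is in the local snapshots of a strict majority of monitors. *)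

theory Defs
  imports Complex_Main "HOL-Library.Multiset"
begin

text \<open>Time is modelled by the reals. Monitors are elements of a finite set Gamma of some type 'm,
  nodes have type 'v. The network evolves over time: E t is the edge set at time t.\<close>

text \<open>Times of the verification rounds of monitor i for the fixed node: monitor i runs its
  rounds periodically with scan period f i and phase phi i.\<close>
definition scan_times :: "('m \<Rightarrow> real) \<Rightarrow> ('m \<Rightarrow> real) \<Rightarrow> 'm \<Rightarrow> real set" where
  "scan_times f phi i = {phi i + real_of_int n * f i | n::int. True}"

text \<open>A run of the monitoring system for node N: at each round (atomic event) of monitor i,
  the local snapshot EM i agrees with E on all connections of N; between rounds the local
  snapshot is not modified for connections of N.\<close>
definition monitoring_run ::
  "'v set \<Rightarrow> 'm set \<Rightarrow> ('m \<Rightarrow> real) \<Rightarrow> ('m \<Rightarrow> real) \<Rightarrow> 'v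
    \<Rightarrow> (real \<Rightarrow> ('v \<times> 'v) set) \<Rightarrow> ('m \<Rightarrow> real \<Rightarrow> ('v \<times> 'v) set) \<Rightarrow> bool" where
  "monitoring_run V Gamma f phi N E EM \<longleftrightarrow>
     (\<forall>t. E t \<subseteq> V \<times> V) \<and>
     (\<forall>i\<in>Gamma. \<forall>s\<in>scan_times f phi i. \<forall>P. (N, P) \<in> EM i s \<longleftrightarrow> (N, P) \<in> E s) \<and>
     (\<forall>i\<in>Gamma. \<forall>s t. s \<le> t \<and> (\<forall>u\<in>scan_times f phi i. \<not> (s < u \<and> u \<le> t)) \<longrightarrow>
        (\<forall>P. (N, P) \<in> EM i t \<longleftrightarrow> (N, P) \<in> EM i s))"

definition atom_snapshot :: "'m set \<Rightarrow> ('m \<Rightarrow> real \<Rightarrow> ('v \<times> 'v) set) \<Rightarrow> real \<Rightarrow> ('v \<times> 'v) set" where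
  "atom_snapshot Gamma EM t =
     {(A, B). real (card {M \<in> Gamma. (A, B) \<in> EM M t}) > real (card Gamma) / 2}"

definition error_frame ::
  "'m set \<Rightarrow> 'v \<Rightarrow> (real \<Rightarrow> ('v \<times> 'v) set) \<Rightarrow> ('m \<Rightarrow> real \<Rightarrow> ('v \<times> 'v) set) \<Rightarrow> 'v
     \<Rightarrow> real \<Rightarrow> real \<Rightarrow> bool" where
  "error_frame Gamma N E EM P a b \<longleftrightarrow> a < b \<and>
     (\<exists>\<beta>. \<forall>t\<in>{a<..<b}. ((N, P) \<in> E t \<longleftrightarrow> \<beta>) \<and> ((N, P) \<in> atom_snapshot Gamma EM t \<longleftrightarrow> \<not> \<beta>))"

text \<open>The (floor(|Gamma|/2)+1)-th smallest scan period (1-based), i.e. index card Gamma div 2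
  (0-based) in the ascending sorted list of the periods of all monitors.\<close>
definition kth_period :: "'m set \<Rightarrow> ('m \<Rightarrow> real) \<Rightarrow> real" where
  "kth_period Gamma f = sorted_list_of_multiset (image_mset f (mset_set Gamma)) ! (card Gamma div 2)"

end

theory Submission
  imports Defs
begin

text \<open>At any time t, a monitor with scan period f i has performed a round within the last f i
  time units, so its local snapshot reproduces the network at some moment of (t - f i, t].
  If an error frame were longer than the (floor(|Gamma|/2)+1)-th smallest period d, then at
  a time t more than d after its start, the strict majority of monitors with period at most d
  would all reproduce the network of the frame, and so would the global snapshot: no error.
  Conversely, if a connection appears at time 0 and monitor i scans at the multiples of f i,
  the connection enters a strict majority of the local snapshots only at time d.\<close>

lemma card_filter_eq_length_filter_sorted:
  assumes "finite A"
  shows "card {a\<in>A. P (f a)} = length (filter P (sorted_list_of_multiset (image_mset f (mset_set A))))"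
proof -
  have "length (filter P (sorted_list_of_multiset (image_mset f (mset_set A))))
      = size (filter_mset P (image_mset f (mset_set A)))"
    by (metis mset_filter mset_sorted_list_of_multiset size_mset)
  also have "\<dots> = size (image_mset f (filter_mset (\<lambda>x. P (f x)) (mset_set A)))"
    by (simp add: filter_mset_image_mset)
  also have "\<dots> = card {a\<in>A. P (f a)}"
    using assms by simp
  finally show ?thesis by simp
qed

lemma sorted_nth_less_length_filter_le:
  assumes "sorted xs" and "k < length xs"
  shows "k < length (filter (\<lambda>x. x \<le> xs ! k) xs)"
proof -
  have "filter (\<lambda>x. x \<le> xs ! k) (take (k + 1) xs) = take (k + 1) xs"
    using assms by (auto simp: filter_id_conv in_set_conv_nth sorted_nth_mono)
  then have "length (filter (\<lambda>x. x \<le> xs ! k) (take (k + 1) xs)) = k + 1"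
    using assms(2) by simp
  moreover have "filter (\<lambda>x. x \<le> xs ! k) xs
      = filter (\<lambda>x. x \<le> xs ! k) (take (k + 1) xs) @ filter (\<lambda>x. x \<le> xs ! k) (drop (k + 1) xs)"
    by (metis append_take_drop_id filter_append)
  ultimately show ?thesis by simp
qed

lemma sorted_length_filter_less_nth_le:
  assumes "sorted xs" and "k < length xs"
  shows "length (filter (\<lambda>x. x < xs ! k) xs) \<le> k"
proof -
  have "filter (\<lambda>x. x < xs ! k) (drop k xs) = []"
    using assms by (auto simp: filter_empty_conv in_set_conv_nth sorted_nth_mono not_less)
  moreover have "filter (\<lambda>x. x < xs ! k) xs
      = filter (\<lambda>x. x < xs ! k) (take k xs) @ filter (\<lambda>x. x < xs ! k) (drop k xs)"
    by (metis append_take_drop_id filter_append)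
  ultimately have "length (filter (\<lambda>x. x < xs ! k) xs) = length (filter (\<lambda>x. x < xs ! k) (take k xs))"
    by simp
  also have "\<dots> \<le> k"
    by (metis length_filter_le length_take min.bounded_iff)
  finally show ?thesis .
qed

context
  fixes Gamma :: "'m set" and f :: "'m \<Rightarrow> real"
  assumes finite: "finite Gamma" and nonempty: "Gamma \<noteq> {}"
begin

private abbreviation "periods \<equiv> sorted_list_of_multiset (image_mset f (mset_set Gamma))"

private lemma periods_length: "length periods = card Gamma"
  by (metis mset_sorted_list_of_multiset size_image_mset size_mset size_mset_set)

private lemma half_less_length_periods: "card Gamma div 2 < length periods"
  using finite nonempty by (simp add: periods_length card_gt_0_iff)

lemma kth_period_mem: "kth_period Gamma f \<in> f ` Gamma"
proof -
  have "kth_period Gamma f \<in> set periods"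
    unfolding kth_period_def using half_less_length_periods by (rule nth_mem)
  then show ?thesis using finite by (simp add: image_iff)
qed

lemma half_less_card_le_kth_period:
  "card Gamma div 2 < card {i\<in>Gamma. f i \<le> kth_period Gamma f}"
  using sorted_nth_less_length_filter_le[OF _ half_less_length_periods]
    card_filter_eq_length_filter_sorted[OF finite, of "\<lambda>x. x \<le> kth_period Gamma f" f]
  by (simp add: kth_period_def)

lemma card_less_kth_period_le_half:
  "card {i\<in>Gamma. f i < kth_period Gamma f} \<le> card Gamma div 2"
  using sorted_length_filter_less_nth_le[OF _ half_less_length_periods]
    card_filter_eq_length_filter_sorted[OF finite, of "\<lambda>x. x < kth_period Gamma f" f]
  by (simp add: kth_period_def)

end

lemma mem_atom_snapshot_iff:
  "(A, B) \<in> atom_snapshot Gamma EM t \<longleftrightarrow> card Gamma div 2 < card {M\<in>Gamma. (A, B) \<in> EM M t}"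
  unfolding atom_snapshot_def by simp linarith

lemma atom_snapshot_majority:
  assumes "finite Gamma" and "S \<subseteq> Gamma" and "card Gamma div 2 < card S"
    and "\<forall>M\<in>S. (A, B) \<in> EM M t \<longleftrightarrow> \<beta>"
  shows "(A, B) \<in> atom_snapshot Gamma EM t \<longleftrightarrow> \<beta>"
proof (cases \<beta>)
  case True
  then have "S \<subseteq> {M\<in>Gamma. (A, B) \<in> EM M t}" using assms(2,4) by auto
  then have "card S \<le> card {M\<in>Gamma. (A, B) \<in> EM M t}"
    using assms(1) by (intro card_mono) auto
  then show ?thesis using True assms(3) by (simp add: mem_atom_snapshot_iff)
next
  case False
  then have "{M\<in>Gamma. (A, B) \<in> EM M t} \<subseteq> Gamma - S" using assms(4) by auto
  then have "card {M\<in>Gamma. (A, B) \<in> EM M t} \<le> card Gamma - card S"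
    using assms(1,2) card_mono[of "Gamma - S"] by (simp add: card_Diff_subset finite_subset)
  then show ?thesis using False assms(3) by (simp add: mem_atom_snapshot_iff)
qed

lemma latest_scan_time:
  assumes "0 < f i"
  obtains u where "u \<in> scan_times f phi i" and "t - f i < u" and "u \<le> t"
    and "\<forall>v\<in>scan_times f phi i. \<not> (u < v \<and> v \<le> t)"
proof
  define n where "n = \<lfloor>(t - phi i) / f i\<rfloor>"
  define u where "u = phi i + real_of_int n * f i"
  show "u \<in> scan_times f phi i" unfolding scan_times_def u_def by blast
  have n_le: "real_of_int n \<le> (t - phi i) / f i" and less_n: "(t - phi i) / f i < real_of_int n + 1"
    unfolding n_def by linarith+
  show "u \<le> t" using n_le assms unfolding u_def by (simp add: field_simps)
  show "t - f i < u" using less_n assms unfolding u_def by (simp add: field_simps)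
  show "\<forall>v\<in>scan_times f phi i. \<not> (u < v \<and> v \<le> t)"
  proof (intro ballI notI)
    fix v assume "v \<in> scan_times f phi i" and v: "u < v \<and> v \<le> t"
    then obtain m :: int where v_eq: "v = phi i + real_of_int m * f i"
      unfolding scan_times_def by blast
    with v have "n < m" using assms unfolding u_def by (simp add: mult_less_cancel_right)
    then have "real_of_int n + 1 \<le> real_of_int m" by linarith
    then have "(real_of_int n + 1) * f i \<le> real_of_int m * f i" using assms by simp
    then show False using v v_eq less_n assms unfolding u_def by (simp add: field_simps)
  qed
qed

lemma local_snapshot_recent:
  assumes "monitoring_run V Gamma f phi N E EM" and "i \<in> Gamma" and "0 < f i"
  obtains u where "t - f i < u" and "u \<le> t" and "(N, P) \<in> EM i t \<longleftrightarrow> (N, P) \<in> E u"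
proof -
  obtain u where u: "u \<in> scan_times f phi i" "t - f i < u" "u \<le> t"
    and no_scan: "\<forall>v\<in>scan_times f phi i. \<not> (u < v \<and> v \<le> t)"
    using latest_scan_time[of f i phi t] assms(3) by blast
  have "(N, P) \<in> EM i t \<longleftrightarrow> (N, P) \<in> EM i u"
    using assms(1,2) u(3) no_scan unfolding monitoring_run_def by blast
  also have "\<dots> \<longleftrightarrow> (N, P) \<in> E u"
    using assms(1,2) u(1) unfolding monitoring_run_def by blast
  finally show ?thesis using that u(2,3) by blast
qed

lemma error_frame_length_le:
  assumes run: "monitoring_run V Gamma f phi N E EM" and err: "error_frame Gamma N E EM P a b"
    and "finite Gamma" and "S \<subseteq> Gamma" and "card Gamma div 2 < card S"
    and periods: "\<forall>i\<in>S. 0 < f i \<and> f i \<le> d"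
  shows "b - a \<le> d"
proof (rule ccontr)
  assume "\<not> b - a \<le> d"
  from err obtain \<beta> where frame:
    "\<forall>t\<in>{a<..<b}. ((N, P) \<in> E t \<longleftrightarrow> \<beta>) \<and> ((N, P) \<in> atom_snapshot Gamma EM t \<longleftrightarrow> \<not> \<beta>)"
    unfolding error_frame_def by blast
  obtain i0 where "i0 \<in> S" using assms(5) by fastforce
  then have "0 \<le> d" using periods by force
  define t where "t = (a + d + b) / 2"
  have t: "t \<in> {a<..<b}" "a + d < t"
    using \<open>\<not> b - a \<le> d\<close> \<open>0 \<le> d\<close> unfolding t_def by auto
  have "\<forall>i\<in>S. (N, P) \<in> EM i t \<longleftrightarrow> \<beta>"
  proof
    fix i assume "i \<in> S"
    obtain u where "t - f i < u" "u \<le> t" "(N, P) \<in> EM i t \<longleftrightarrow> (N, P) \<in> E u"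
      using local_snapshot_recent[OF run] \<open>i \<in> S\<close> assms(4) periods by blast
    moreover have "u \<in> {a<..<b}" using calculation(1,2) t periods \<open>i \<in> S\<close> by fastforce
    ultimately show "(N, P) \<in> EM i t \<longleftrightarrow> \<beta>" using frame by blast
  qed
  then have "(N, P) \<in> atom_snapshot Gamma EM t \<longleftrightarrow> \<beta>"
    by (rule atom_snapshot_majority[OF assms(3-5)])
  then show False using frame t(1) by auto
qed

lemma scan_times_self_ge_iff:
  assumes "0 < f i" and "s \<in> scan_times f f i"
  shows "f i \<le> s \<longleftrightarrow> 0 < s"
proof -
  obtain n :: int where "s = real_of_int (n + 1) * f i"
    using assms(2) unfolding scan_times_def by (auto simp: algebra_simps)
  then show ?thesis using assms(1)
    by (simp add: zero_less_mult_iff mult_le_cancel_right1 del: of_int_add)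
qed

lemma monitoring_run_step:
  assumes "\<forall>i\<in>Gamma. 0 < f i" and "N \<in> V" and "P \<in> V"
  shows "monitoring_run V Gamma f f N (\<lambda>t. if 0 < t then {(N, P)} else {})
           (\<lambda>i t. if f i \<le> t then {(N, P)} else {})"
  unfolding monitoring_run_def
proof (intro conjI ballI allI impI)
  show "(if 0 < t then {(N, P)} else {}) \<subseteq> V \<times> V" for t :: real
    using assms(2,3) by auto
  show "(N, Q) \<in> (if f i \<le> s then {(N, P)} else {}) \<longleftrightarrow> (N, Q) \<in> (if 0 < s then {(N, P)} else {})"
    if "i \<in> Gamma" and "s \<in> scan_times f f i" for i s Q
    using scan_times_self_ge_iff[OF _ that(2)] assms(1) that(1) by auto
  show "(N, Q) \<in> (if f i \<le> t then {(N, P)} else {}) \<longleftrightarrow> (N, Q) \<in> (if f i \<le> s then {(N, P)} else {})"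
    if "s \<le> t \<and> (\<forall>u\<in>scan_times f f i. \<not> (s < u \<and> u \<le> t))" for i s t Q
  proof -
    have "f i \<in> scan_times f f i" unfolding scan_times_def by force
    then show ?thesis using that by auto
  qed
qed

lemma error_frame_step:
  assumes "finite Gamma" and "0 < d" and "card {i\<in>Gamma. f i < d} \<le> card Gamma div 2"
  shows "error_frame Gamma N (\<lambda>t. if 0 < t then {(N, P)} else {})
           (\<lambda>i t. if f i \<le> t then {(N, P)} else {}) P 0 d"
  unfolding error_frame_def
proof (intro conjI exI[of _ True] ballI)
  fix t assume t: "t \<in> {0<..<d}"
  then show "(N, P) \<in> (if 0 < t then {(N, P)} else {}) \<longleftrightarrow> True" by simp
  have "{M\<in>Gamma. (N, P) \<in> (if f M \<le> t then {(N, P)} else {})} \<subseteq> {i\<in>Gamma. f i < d}"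
    using t by auto
  then have "card {M\<in>Gamma. (N, P) \<in> (if f M \<le> t then {(N, P)} else {})} \<le> card {i\<in>Gamma. f i < d}"
    by (rule card_mono[rotated]) (use assms(1) in simp)
  also have "\<dots> \<le> card Gamma div 2" by (rule assms(3))
  finally show "(N, P) \<in> atom_snapshot Gamma (\<lambda>i t. if f i \<le> t then {(N, P)} else {}) t \<longleftrightarrow> \<not> True"
    by (simp add: mem_atom_snapshot_iff)
qed (use assms(2) in simp)

theorem theorem3:
  fixes V :: "'v set" and Gamma :: "'m set" and f :: "'m \<Rightarrow> real" and N :: 'v
  assumes "finite Gamma" and "Gamma \<noteq> {}" and "\<forall>i\<in>Gamma. f i > 0" and "N \<in> V"
  shows "(\<forall>phi E EM P a b. monitoring_run V Gamma f phi N E EM \<and> error_frame Gamma N E EM P a b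
            \<longrightarrow> b - a \<le> kth_period Gamma f)
       \<and> (\<forall>P\<in>V. \<exists>phi E EM a b. monitoring_run V Gamma f phi N E EM \<and> error_frame Gamma N E EM P a b
            \<and> b - a = kth_period Gamma f)"
proof -
  let ?d = "kth_period Gamma f"
  have "0 < ?d" using kth_period_mem[OF assms(1,2), of f] assms(3) by auto
  have majority: "card Gamma div 2 < card {i\<in>Gamma. f i \<le> ?d}"
    by (rule half_less_card_le_kth_period[OF assms(1,2)])
  have upper: "b - a \<le> ?d"
    if "monitoring_run V Gamma f phi N E EM" and "error_frame Gamma N E EM P a b" for phi E EM P a b
    by (rule error_frame_length_le[OF that assms(1) _ majority]) (use assms(3) in auto)
  have attained: "\<exists>phi E EM a b. monitoring_run V Gamma f phi N E EM \<and> error_frame Gamma N E EM P a b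
      \<and> b - a = ?d" if "P \<in> V" for P
    using monitoring_run_step[OF assms(3,4) that]
      error_frame_step[OF assms(1) \<open>0 < ?d\<close> card_less_kth_period_le_half[OF assms(1,2)]]
    by (metis diff_zero)
  show ?thesis using upper attained by blast
qed

end
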